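(* Let $\gamma:[0,1]\to\mathbb{R}^2$ be a $C^1$ curve of constant speed $c>0$ which is not closed ($\gamma(0)\neq\gamma(1)$), whose turning angle function $\theta$ satisfies $\theta(1)-\theta(0)=2\pi m$ with $0\neq m\in\mathbb{Z}$. Let $k\ge 3$ and $\sigma\in S_k$. Then there exist cuts $C\in\operatorname{int}(D_k)$ such that the rearranged curve $r_{\sigma,C}$ is a closed $C^1$ curve if and only if $\sigma\in S_k\setminus Z_k$, i.e. $\sigma$ is not a cyclic shift.
   Context: A turning angle function is a continuous $\theta$ with $\gamma'(s)=c(\cos\theta(s),\sin\theta(s))$. Concatenation $\alpha*\beta$ of two $C^1$ planar curves of the same constant speed ($\alpha$ on $[a_1,b_1]$, $\beta$ on $[a_2,b_2]$) is the curve on $[0,(b_1-a_1)+(b_2-a_2)]$ equal to $\alpha(s+a_1)$ for $s\le b_1-a_1$ and to $T(\beta(s-(b_1-a_1)+a_2))$ afterwards, where $T$ is the orientation-preserving rigid motion sending $\beta(a_2)$ to $\alpha(b_1)$ and the unit tangent of $\beta$ at $a_2$ to that of $\alpha$ at $b_1$; it is associative. Let $D_k=\{(c_1,\dots,c_{k-1})\in[0,1]^{k-1}: 0\le c_1\le\dots\le c_{k-1}\le 1\}$, with interior $\operatorname{int}(D_k)$ in $\mathbb{R}^{k-1}$; set $c_0=0$, $c_k=1$. For $C\in D_k$ let $\gamma_i$ be the restriction of $\gamma$ to $[c_{i-1},c_i]$, $i=1,\dots,k$ (a degenerate arc is a point carrying the tangent direction of $\gamma$ there). For $\sigma\in S_k$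 (permutations of $\{1,\dots,k\}$), $r_{\sigma,C}:=\gamma_{\sigma(1)}*\gamma_{\sigma(2)}*\dots*\gamma_{\sigma(k)}$, parametrized over $[0,1]$ (and moved by a rigid motion to start at the origin with initial tangent along the positive $x$-axis). A closed $C^1$ curve means $r_{\sigma,C}(0)=r_{\sigma,C}(1)$ and equal tangents there. $Z_k=\{z_0,\dots,z_{k-1}\}\subseteq S_k$ is the subgroup of cyclic shifts, $z_h(i)=i+h$ if $i\le k-h$ and $z_h(i)=i+h-k$ if $i>k-h$. *)

theory Defs
  imports "HOL-Analysis.Analysis" "HOL-Combinatorics.Permutations"
begin

text \<open>The plane R^2 is identified with the complex numbers. A (parametrized) curve
  piece is a triple (f, a, b): the map f restricted to the interval [a,b].\<close>

type_synonym pcurve = "(real \<Rightarrow> complex) \<times> real \<times> real"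

definition unit_tangent_start :: "pcurve \<Rightarrow> complex" where
  "unit_tangent_start \<alpha> = (case \<alpha> of (f, a, b) \<Rightarrow> sgn (vector_derivative f (at a within {a..b})))"

definition unit_tangent_end :: "pcurve \<Rightarrow> complex" where
  "unit_tangent_end \<alpha> = (case \<alpha> of (f, a, b) \<Rightarrow> sgn (vector_derivative f (at b within {a..b})))"

text \<open>Concatenation alpha * beta: beta is moved by the orientation-preserving rigid motion T
  sending beta(a2) to alpha(b1) and the unit tangent of beta at a2 to that of alpha at b1.\<close>
definition concat :: "pcurve \<Rightarrow> pcurve \<Rightarrow> pcurve" where
  "concat \<alpha> \<beta> = (case \<alpha> of (f1, a1, b1) \<Rightarrow> case \<beta> of (f2, a2, b2) \<Rightarrow>
     (let u = unit_tangent_end \<alpha> / unit_tangent_start \<beta>;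
          T = (\<lambda>z. f1 b1 + u * (z - f2 a2))
      in (\<lambda>s. if s \<le> b1 - a1 then f1 (s + a1) else T (f2 (s - (b1 - a1) + a2)),
          0, (b1 - a1) + (b2 - a2))))"

definition sub_arc :: "(real \<Rightarrow> complex) \<Rightarrow> (nat \<Rightarrow> real) \<Rightarrow> nat \<Rightarrow> pcurve" where
  "sub_arc \<gamma> C i = (\<gamma>, C (i - 1), C i)"

text \<open>r_{sigma,C} = gamma_sigma(1) * ... * gamma_sigma(k), moved by a rigid motion to start at
  the origin with initial tangent along the positive x-axis.\<close>
definition rearranged :: "(real \<Rightarrow> complex) \<Rightarrow> nat \<Rightarrow> (nat \<Rightarrow> nat) \<Rightarrow> (nat \<Rightarrow> real) \<Rightarrow> real \<Rightarrow> complex" where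
  "rearranged \<gamma> k \<sigma> C =
     (case foldl concat (sub_arc \<gamma> C (\<sigma> 1)) (map (\<lambda>j. sub_arc \<gamma> C (\<sigma> j)) [2..<Suc k]) of
       (f, a, b) \<Rightarrow> (\<lambda>s. (f s - f a) * cnj (sgn (vector_derivative f (at a within {a..b})))))"

definition closed_C1 :: "(real \<Rightarrow> complex) \<Rightarrow> bool" where
  "closed_C1 r \<longleftrightarrow> r 0 = r 1 \<and>
     vector_derivative r (at 0 within {0..1}) = vector_derivative r (at 1 within {0..1})"

definition is_cyclic_shift :: "nat \<Rightarrow> (nat \<Rightarrow> nat) \<Rightarrow> bool" where
  "is_cyclic_shift k \<sigma> \<longleftrightarrow>
     (\<exists>h<k. \<forall>i\<in>{1..k}. \<sigma> i = (if i \<le> k - h then i + h else i + h - k))"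

end

theory Submission
  imports Defs
begin

text \<open>
  In the frame of its initial tangent, the rearranged curve is obtained by rotating each arc by
  the turning accumulated before it, so its end point is the sum \<open>rearranged_displacement\<close>,
  while its final tangent differs from the initial one by the total turning
  \<open>\<theta> 1 - \<theta> 0 = 2 pi m\<close>. Hence it is a closed C1 curve iff that sum vanishes. For a cyclic
  shift the arcs are glued back in their original order and the sum is a rotation of
  \<open>\<gamma> 1 - \<gamma> 0 \<noteq> 0\<close>.

  Otherwise some values \<open>p < q < r\<close> of \<open>\<sigma>\<close> sit at positions in reversed cyclic order. Keeping only
  the arcs \<open>p, q, r\<close>, with cut points \<open>0 \<le> x \<le> y \<le> 1\<close>, makes the sum a function on a
  triangle. On each edge only two arcs survive and the sum is \<open>\<gamma> 1 - \<gamma> 0\<close> rotated back by the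
  turning of an initial segment of the curve; because of the reversed order, this rotation turns by
  \<open>2 pi m \<noteq> 0\<close> once around the boundary. A perturbation to strictly increasing cuts stays uniformly
  close to it, hence must vanish somewhere: a nonvanishing function on the convex triangle has a
  continuous logarithm and cannot wind.
\<close>

lemma has_vector_derivative_shift_Icc:
  fixes f :: "real \<Rightarrow> 'a::real_normed_vector"
  assumes "(f has_vector_derivative d) (at x within {a..b})"
  shows "((\<lambda>s. f (s + c)) has_vector_derivative d) (at (x - c) within {a - c..b - c})"
proof -
  have "((\<lambda>s. s + c) has_vector_derivative 1) (at (x - c) within {a - c..b - c})"
    by (auto intro!: derivative_eq_intros)
  moreover have "(f has_vector_derivative d) (at ((\<lambda>s. s + c) (x - c)) within (\<lambda>s. s + c) ` {a - c..b - c})"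
    using assms by simp
  ultimately show ?thesis
    using vector_diff_chain_within by (fastforce simp: o_def)
qed

lemma at_within_Icc_left_endpoint:
  fixes a l b :: real
  assumes "a < l" "l \<le> b"
  shows "at a within {a..b} = at a within {a..l}"
  by (rule at_within_nhd[where S = "{..<l}"]) (use assms in auto)

lemma at_within_Icc_right_endpoint:
  fixes a l b :: real
  assumes "a \<le> l" "l < b"
  shows "at b within {a..b} = at b within {l..b}"
  by (rule at_within_nhd[where S = "{l<..}"]) (use assms in auto)

lemma unit_tangent_start_eq:
  "a < b \<Longrightarrow> (f has_vector_derivative d) (at a within {a..b}) \<Longrightarrow> unit_tangent_start (f, a, b) = sgn d"
  by (simp add: unit_tangent_start_def vector_derivative_within_closed_interval)

lemma unit_tangent_end_eq:
  "a < b \<Longrightarrow> (f has_vector_derivative d) (at b within {a..b}) \<Longrightarrow> unit_tangent_end (f, a, b) = sgn d"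
  by (simp add: unit_tangent_end_def vector_derivative_within_closed_interval)

lemma concat_unfold:
  "concat (f, a, b) (g, a', b') =
     ((\<lambda>s. if s \<le> b - a then f (s + a)
           else f b + unit_tangent_end (f, a, b) / unit_tangent_start (g, a', b')
                         * (g (s - (b - a) + a') - g a')),
      0, (b - a) + (b' - a'))"
  by (simp add: concat_def Let_def)

lemma concat_has_vector_derivative_start:
  assumes "a < b" "a' \<le> b'" "(f has_vector_derivative d) (at a within {a..b})"
  shows "(fst (concat (f, a, b) (g, a', b')) has_vector_derivative d)
           (at 0 within {0..(b - a) + (b' - a')})"
proof -
  have "((\<lambda>s. f (s + a)) has_vector_derivative d) (at 0 within {0..b - a})"
    using has_vector_derivative_shift_Icc[OF assms(3), of a] by simp
  then have "(fst (concat (f, a, b) (g, a', b')) has_vector_derivative d) (at 0 within {0..b - a})"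
    by (rule has_vector_derivative_transform[rotated 2]) (use assms in \<open>auto simp: concat_unfold\<close>)
  then show ?thesis
    using at_within_Icc_left_endpoint[of 0 "b - a" "(b - a) + (b' - a')"] assms by simp
qed

lemma concat_has_vector_derivative_end:
  fixes f g :: "real \<Rightarrow> complex"
  assumes "a < b" "a' < b'" "(g has_vector_derivative d) (at b' within {a'..b'})"
  defines "u \<equiv> unit_tangent_end (f, a, b) / unit_tangent_start (g, a', b')"
  shows "(fst (concat (f, a, b) (g, a', b')) has_vector_derivative u * d)
           (at ((b - a) + (b' - a')) within {0..(b - a) + (b' - a')})"
proof -
  let ?l = "b - a" and ?L = "(b - a) + (b' - a')"
  have "((\<lambda>s. g (s + (a' - ?l))) has_vector_derivative d) (at ?L within {?l..?L})"
    using has_vector_derivative_shift_Icc[OF assms(3), of "a' - ?l"] by (simp add: algebra_simps)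
  then have "((\<lambda>s. f b + u * (g (s - ?l + a') - g a')) has_vector_derivative u * d) (at ?L within {?l..?L})"
    by (auto intro!: derivative_eq_intros simp: algebra_simps)
  then have "(fst (concat (f, a, b) (g, a', b')) has_vector_derivative u * d) (at ?L within {?l..?L})"
    by (rule has_vector_derivative_transform[rotated 2]) (use assms in \<open>auto simp: concat_unfold\<close>)
  then show ?thesis
    using at_within_Icc_right_endpoint[of 0 ?l ?L] assms by simp
qed

lemma concat_endpoint_data:
  fixes f g :: "real \<Rightarrow> complex"
  assumes ab: "a < b" "a' < b'"
    and f: "(f has_vector_derivative v) (at a within {a..b})" "(f has_vector_derivative w) (at b within {a..b})"
    and g: "(g has_vector_derivative v') (at a' within {a'..b'})" "(g has_vector_derivative w') (at b' within {a'..b'})"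
  defines "L \<equiv> (b - a) + (b' - a')" and "u \<equiv> sgn w / sgn v'"
  obtains h where "concat (f, a, b) (g, a', b') = (h, 0, L)" "0 < L"
    "h 0 = f a" "(h has_vector_derivative v) (at 0 within {0..L})"
    "h L = f b + u * (g b' - g a')" "(h has_vector_derivative u * w') (at L within {0..L})"
proof
  let ?h = "fst (concat (f, a, b) (g, a', b'))"
  have u: "unit_tangent_end (f, a, b) / unit_tangent_start (g, a', b') = u"
    using unit_tangent_end_eq[OF ab(1) f(2)] unit_tangent_start_eq[OF ab(2) g(1)] by (simp add: u_def)
  show "concat (f, a, b) (g, a', b') = (?h, 0, L)" "0 < L" "?h 0 = f a"
    using ab by (simp_all add: concat_unfold L_def)
  show "?h L = f b + u * (g b' - g a')"
    using ab by (simp add: concat_unfold L_def u)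
  show "(?h has_vector_derivative v) (at 0 within {0..L})"
    using concat_has_vector_derivative_start[OF ab(1) less_imp_le[OF ab(2)] f(1)] by (simp add: L_def)
  show "(?h has_vector_derivative u * w') (at L within {0..L})"
    using concat_has_vector_derivative_end[OF ab g(2), where f = f] by (simp add: L_def u)
qed

definition turning_before :: "(real \<Rightarrow> real) \<Rightarrow> (nat \<Rightarrow> real) \<Rightarrow> (nat \<Rightarrow> nat) \<Rightarrow> nat \<Rightarrow> real" where
  "turning_before \<theta> C \<sigma> j = (\<Sum>l = 1..<j. \<theta> (C (\<sigma> l)) - \<theta> (C (\<sigma> l - 1)))"

text \<open>The arc \<open>\<gamma>\<^sub>\<sigma>\<^sub>l\<close> enters the rearranged curve rotated so that its initial tangent has
  direction \<open>turning_before \<theta> C \<sigma> l\<close> relative to the initial tangent of the whole curve.\<close>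

definition rearranged_displacement ::
    "(real \<Rightarrow> complex) \<Rightarrow> (real \<Rightarrow> real) \<Rightarrow> (nat \<Rightarrow> real) \<Rightarrow> (nat \<Rightarrow> nat) \<Rightarrow> nat \<Rightarrow> complex" where
  "rearranged_displacement \<gamma> \<theta> C \<sigma> j =
     (\<Sum>l = 1..j. cis (turning_before \<theta> C \<sigma> l - \<theta> (C (\<sigma> l - 1))) * (\<gamma> (C (\<sigma> l)) - \<gamma> (C (\<sigma> l - 1))))"

definition partial_concat :: "(real \<Rightarrow> complex) \<Rightarrow> (nat \<Rightarrow> real) \<Rightarrow> (nat \<Rightarrow> nat) \<Rightarrow> nat \<Rightarrow> pcurve" where
  "partial_concat \<gamma> C \<sigma> j = foldl concat (sub_arc \<gamma> C (\<sigma> 1)) (map (\<lambda>l. sub_arc \<gamma> C (\<sigma> l)) [2..<Suc j])"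

lemma turning_before_Suc_0 [simp]: "turning_before \<theta> C \<sigma> (Suc 0) = 0"
  by (simp add: turning_before_def)

lemma rearranged_displacement_0 [simp]: "rearranged_displacement \<gamma> \<theta> C \<sigma> 0 = 0"
  by (simp add: rearranged_displacement_def)

lemma partial_concat_Suc:
  "1 \<le> j \<Longrightarrow> partial_concat \<gamma> C \<sigma> (Suc j) = concat (partial_concat \<gamma> C \<sigma> j) (\<gamma>, C (\<sigma> (Suc j) - 1), C (\<sigma> (Suc j)))"
  by (simp add: partial_concat_def sub_arc_def)

lemma rearranged_displacement_Suc:
  "rearranged_displacement \<gamma> \<theta> C \<sigma> (Suc j) = rearranged_displacement \<gamma> \<theta> C \<sigma> j
     + cis (turning_before \<theta> C \<sigma> (Suc j) - \<theta> (C (\<sigma> (Suc j) - 1))) * (\<gamma> (C (\<sigma> (Suc j))) - \<gamma> (C (\<sigma> (Suc j) - 1)))"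
  by (simp add: rearranged_displacement_def)

lemma turning_before_Suc:
  "1 \<le> j \<Longrightarrow> turning_before \<theta> C \<sigma> (Suc j) = turning_before \<theta> C \<sigma> j + \<theta> (C (\<sigma> j)) - \<theta> (C (\<sigma> j - 1))"
  by (simp add: turning_before_def)

lemma partial_concat_endpoints:
  fixes \<gamma> \<gamma>' :: "real \<Rightarrow> complex" and \<theta> :: "real \<Rightarrow> real" and C :: "nat \<Rightarrow> real"
  assumes deriv: "\<forall>s\<in>{0..1}. (\<gamma> has_vector_derivative \<gamma>' s) (at s within {0..1})"
    and theta: "\<forall>s\<in>{0..1}. \<gamma>' s = complex_of_real c * cis (\<theta> s)" and c: "c > 0"
    and arcs: "\<And>l. l \<in> {1..j} \<Longrightarrow> 0 \<le> C (\<sigma> l - 1) \<and> C (\<sigma> l - 1) < C (\<sigma> l) \<and> C (\<sigma> l) \<le> 1"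
    and j: "1 \<le> j"
  defines "s0 \<equiv> C (\<sigma> 1 - 1)"
  shows "\<exists>f a b. partial_concat \<gamma> C \<sigma> j = (f, a, b) \<and> a < b \<and> (2 \<le> j \<longrightarrow> a = 0)
     \<and> b - a = (\<Sum>l = 1..j. C (\<sigma> l) - C (\<sigma> l - 1))
     \<and> f a = \<gamma> s0 \<and> (f has_vector_derivative \<gamma>' s0) (at a within {a..b})
     \<and> f b = \<gamma> s0 + cis (\<theta> s0) * rearranged_displacement \<gamma> \<theta> C \<sigma> j
     \<and> (f has_vector_derivative c * cis (\<theta> s0 + turning_before \<theta> C \<sigma> (Suc j))) (at b within {a..b})"
proof -
  have arc_deriv: "(\<gamma> has_vector_derivative \<gamma>' s) (at s within {x..y})"
    if "0 \<le> x" "y \<le> 1" "s \<in> {x..y}" for s x y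
  proof (rule has_vector_derivative_within_subset)
    show "(\<gamma> has_vector_derivative \<gamma>' s) (at s within {0..1})"
      using deriv that by auto
  qed (use that in auto)
  show ?thesis
    using j arcs
  proof (induction j rule: nat_induct_at_least)
    case base
    then show ?case
      using theta arc_deriv[of s0 "C (\<sigma> 1)"]
      by (auto simp: partial_concat_def sub_arc_def s0_def rearranged_displacement_def turning_before_def
          cis_mult simp flip: mult.assoc)
  next
    case (Suc j)
    then obtain f a b where fab: "partial_concat \<gamma> C \<sigma> j = (f, a, b)" "a < b" "2 \<le> j \<longrightarrow> a = 0"
      "b - a = (\<Sum>l = 1..j. C (\<sigma> l) - C (\<sigma> l - 1))" "f a = \<gamma> s0"
      "(f has_vector_derivative \<gamma>' s0) (at a within {a..b})"
      "f b = \<gamma> s0 + cis (\<theta> s0) * rearranged_displacement \<gamma> \<theta> C \<sigma> j"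
      "(f has_vector_derivative c * cis (\<theta> s0 + turning_before \<theta> C \<sigma> (Suc j))) (at b within {a..b})"
      by auto
    define s where "s = C (\<sigma> (Suc j) - 1)"
    define e where "e = C (\<sigma> (Suc j))"
    define A where "A = turning_before \<theta> C \<sigma> (Suc j)"
    have se: "0 \<le> s" "s < e" "e \<le> 1"
      using Suc.prems[of "Suc j"] by (auto simp: s_def e_def)
    have "sgn (c * cis (\<theta> s0 + A)) / sgn (\<gamma>' s) = cis (\<theta> s0) * cis (A - \<theta> s)"
      using c theta se by (simp add: sgn_mult sgn_of_real cis_divide cis_mult add_diff_eq)
    with concat_endpoint_data[OF fab(2) se(2) fab(6) fab(8)[folded A_def] arc_deriv[of s e s] arc_deriv[of s e e]]
    obtain g where g: "concat (f, a, b) (\<gamma>, s, e) = (g, 0, (b - a) + (e - s))" "0 < (b - a) + (e - s)"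
      "g 0 = f a" "(g has_vector_derivative \<gamma>' s0) (at 0 within {0..(b - a) + (e - s)})"
      "g ((b - a) + (e - s)) = f b + cis (\<theta> s0) * cis (A - \<theta> s) * (\<gamma> e - \<gamma> s)"
      "(g has_vector_derivative cis (\<theta> s0) * cis (A - \<theta> s) * \<gamma>' e) (at ((b - a) + (e - s)) within {0..(b - a) + (e - s)})"
      using se by auto
    have "partial_concat \<gamma> C \<sigma> (Suc j) = concat (f, a, b) (\<gamma>, s, e)"
      using partial_concat_Suc[of j \<gamma> C \<sigma>] Suc.hyps fab(1) by (simp add: s_def e_def)
    moreover have "cis (\<theta> s0) * cis (A - \<theta> s) * \<gamma>' e = c * cis (\<theta> s0 + turning_before \<theta> C \<sigma> (Suc (Suc j)))"
      using theta se turning_before_Suc[of "Suc j" \<theta> C \<sigma>]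
      by (simp add: A_def s_def e_def cis_mult mult.left_commute) (simp add: algebra_simps)
    moreover have "f b + cis (\<theta> s0) * cis (A - \<theta> s) * (\<gamma> e - \<gamma> s)
        = \<gamma> s0 + cis (\<theta> s0) * rearranged_displacement \<gamma> \<theta> C \<sigma> (Suc j)"
      by (simp add: fab(7) rearranged_displacement_Suc A_def s_def e_def algebra_simps)
    moreover have "(b - a) + (e - s) = (\<Sum>l = 1..Suc j. C (\<sigma> l) - C (\<sigma> l - 1))"
      using fab(4) by (simp add: s_def e_def)
    ultimately show ?case
      using g fab(5) by auto
  qed
qed

lemma cuts_mono:
  fixes C :: "nat \<Rightarrow> real"
  assumes "\<forall>i<k. C i < C (Suc i)" "i \<le> j" "j \<le> k"
  shows "C i \<le> C j"
  using assms(2,3)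
proof (induction j)
  case (Suc j)
  show ?case
  proof (cases "i = Suc j")
    case False
    then have "C i \<le> C j"
      using Suc by simp
    also have "C j < C (Suc j)"
      using assms(1) Suc.prems by simp
    finally show ?thesis
      by simp
  qed simp
qed simp

lemma cuts_arc_bounds:
  fixes C :: "nat \<Rightarrow> real"
  assumes "C 0 = 0" "C k = 1" "\<forall>i<k. C i < C (Suc i)" "i \<in> {1..k}"
  shows "0 \<le> C (i - 1) \<and> C (i - 1) < C i \<and> C i \<le> 1"
proof -
  have "i - 1 < k"
    using assms(4) by auto
  then have "C (i - 1) < C (Suc (i - 1))"
    using assms(3) by blast
  then show ?thesis
    using cuts_mono[OF assms(3), of 0 "i - 1"] cuts_mono[OF assms(3), of i k] assms by auto
qed

lemma sum_telescope_pred: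
  "(\<Sum>i = 1..n. F i - F (i - 1)) = F n - (F 0 :: 'a::ab_group_add)" for n :: nat
  by (induction n) (auto simp: sum.atLeast_Suc_atMost)

lemma sum_permuted_increments:
  fixes k :: nat
  assumes "\<sigma> permutes {1..k}"
  shows "(\<Sum>l = 1..k. F (\<sigma> l) - F (\<sigma> l - 1)) = F k - (F 0 :: 'a::ab_group_add)"
  using sum.permute[OF assms, of "\<lambda>i. F i - F (i - 1)"] sum_telescope_pred[of F k] by (simp add: o_def)

lemma cis_add_full_turn:
  assumes "cis a = cis b"
  shows "cis (x + a - b) = cis x"
proof -
  have "cis (x + a - b) = cis x * cis a / cis b"
    by (simp add: cis_mult cis_divide add_diff_eq)
  then show ?thesis
    using assms by simp
qed

lemma closed_C1_normalized_iff:
  fixes f :: "real \<Rightarrow> complex"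
  assumes "(f has_vector_derivative v) (at 0 within {0..1})" "(f has_vector_derivative v') (at 1 within {0..1})"
    and "w \<noteq> 0"
  shows "closed_C1 (\<lambda>s. (f s - f 0) * w) \<longleftrightarrow> f 1 = f 0 \<and> v' = v"
proof -
  have "vector_derivative (\<lambda>s. (f s - f 0) * w) (at t within {0..1}) = d * w"
    if "t \<in> {0..1}" "(f has_vector_derivative d) (at t within {0..1})" for t d
    by (rule vector_derivative_within_closed_interval) (use that in \<open>auto intro!: derivative_eq_intros\<close>)
  then show ?thesis
    using assms by (auto simp: closed_C1_def)
qed

lemma closed_C1_rearranged_iff:
  fixes \<gamma> \<gamma>' :: "real \<Rightarrow> complex" and \<theta> :: "real \<Rightarrow> real" and C :: "nat \<Rightarrow> real"
  assumes deriv: "\<forall>s\<in>{0..1}. (\<gamma> has_vector_derivative \<gamma>' s) (at s within {0..1})"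
    and theta: "\<forall>s\<in>{0..1}. \<gamma>' s = complex_of_real c * cis (\<theta> s)" and c: "c > 0"
    and tangents: "cis (\<theta> 1) = cis (\<theta> 0)"
    and perm: "\<sigma> permutes {1..k}" and k: "2 \<le> k"
    and cuts: "C 0 = 0" "C k = 1" "\<forall>i<k. C i < C (Suc i)"
  shows "closed_C1 (rearranged \<gamma> k \<sigma> C) \<longleftrightarrow> rearranged_displacement \<gamma> \<theta> C \<sigma> k = 0"
proof -
  define s0 where "s0 = C (\<sigma> 1 - 1)"
  have arcs: "0 \<le> C (\<sigma> l - 1) \<and> C (\<sigma> l - 1) < C (\<sigma> l) \<and> C (\<sigma> l) \<le> 1" if "l \<in> {1..k}" for l
    using cuts_arc_bounds[OF cuts] permutes_in_image[OF perm] that by blast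
  have s0: "s0 \<in> {0..1}"
    using arcs[of 1] k by (simp add: s0_def)
  obtain f a b where fab: "partial_concat \<gamma> C \<sigma> k = (f, a, b)" "2 \<le> k \<longrightarrow> a = 0"
    "b - a = (\<Sum>l = 1..k. C (\<sigma> l) - C (\<sigma> l - 1))" "f a = \<gamma> s0"
    "(f has_vector_derivative \<gamma>' s0) (at a within {a..b})"
    "f b = \<gamma> s0 + cis (\<theta> s0) * rearranged_displacement \<gamma> \<theta> C \<sigma> k"
    "(f has_vector_derivative c * cis (\<theta> s0 + turning_before \<theta> C \<sigma> (Suc k))) (at b within {a..b})"
    using partial_concat_endpoints[where j = k and \<sigma> = \<sigma> and C = C, OF deriv theta c arcs] k unfolding s0_def by auto
  have a: "a = 0" and b: "b = 1"
    using fab(2,3) k sum_permuted_increments[OF perm, of C] cuts by auto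
  have "turning_before \<theta> C \<sigma> (Suc k) = \<theta> 1 - \<theta> 0"
    using sum_permuted_increments[OF perm, of "\<lambda>i. \<theta> (C i)"] cuts
    by (simp add: turning_before_def atLeastLessThanSuc_atLeastAtMost)
  \<comment> \<open>so the tangent condition of \<open>closed_C1\<close> holds for every choice of cuts\<close>
  then have end_tangent: "c * cis (\<theta> s0 + turning_before \<theta> C \<sigma> (Suc k)) = \<gamma>' s0"
    using theta s0 cis_add_full_turn[OF tangents, of "\<theta> s0"] by (simp add: add_diff_eq)
  define w where "w = cnj (sgn (\<gamma>' s0))"
  have w: "w \<noteq> 0"
    using theta s0 c by (simp add: w_def sgn_mult sgn_of_real)
  have r: "rearranged \<gamma> k \<sigma> C = (\<lambda>s. (f s - f 0) * w)"
    unfolding rearranged_def partial_concat_def[symmetric] fab(1)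
    using fab(5) a b by (simp add: w_def vector_derivative_within_closed_interval)
  show ?thesis
    unfolding r using closed_C1_normalized_iff[of f "\<gamma>' s0" "\<gamma>' s0" w] fab(4-7) end_tangent a b w by auto
qed

lemma rearranged_consecutive_run:
  assumes "\<forall>l\<in>{i + 1..i + j}. \<sigma> l = a + (l - i)"
  shows "turning_before \<theta> C \<sigma> (i + j + 1) = turning_before \<theta> C \<sigma> (i + 1) + \<theta> (C (a + j)) - \<theta> (C a)
    \<and> rearranged_displacement \<gamma> \<theta> C \<sigma> (i + j) = rearranged_displacement \<gamma> \<theta> C \<sigma> i
        + cis (turning_before \<theta> C \<sigma> (i + 1) - \<theta> (C a)) * (\<gamma> (C (a + j)) - \<gamma> (C a))"
  using assms
proof (induction j)
  case (Suc j)
  have run: "\<sigma> (Suc (i + j)) = Suc (a + j)"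
    using Suc.prems by auto
  have "\<forall>l\<in>{i + 1..i + j}. \<sigma> l = a + (l - i)"
    using Suc.prems by auto
  then have IH_turning: "turning_before \<theta> C \<sigma> (i + j + 1) = turning_before \<theta> C \<sigma> (i + 1) + \<theta> (C (a + j)) - \<theta> (C a)"
    and IH_displacement: "rearranged_displacement \<gamma> \<theta> C \<sigma> (i + j) = rearranged_displacement \<gamma> \<theta> C \<sigma> i
        + cis (turning_before \<theta> C \<sigma> (i + 1) - \<theta> (C a)) * (\<gamma> (C (a + j)) - \<gamma> (C a))"
    using Suc.IH by blast+
  have "turning_before \<theta> C \<sigma> (i + Suc j + 1)
      = turning_before \<theta> C \<sigma> (i + j + 1) + \<theta> (C (a + Suc j)) - \<theta> (C (a + j))"
    using turning_before_Suc[of "i + j + 1" \<theta> C \<sigma>] by (simp add: run)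
  moreover have "rearranged_displacement \<gamma> \<theta> C \<sigma> (i + Suc j) = rearranged_displacement \<gamma> \<theta> C \<sigma> (i + j)
      + cis (turning_before \<theta> C \<sigma> (i + 1) - \<theta> (C a)) * (\<gamma> (C (a + Suc j)) - \<gamma> (C (a + j)))"
  proof -
    have "turning_before \<theta> C \<sigma> (i + j + 1) - \<theta> (C (a + j)) = turning_before \<theta> C \<sigma> (i + 1) - \<theta> (C a)"
      using IH_turning by simp
    then show ?thesis
      using rearranged_displacement_Suc[of \<gamma> \<theta> C \<sigma> "i + j"] by (simp add: run)
  qed
  ultimately show ?case
    unfolding IH_turning IH_displacement by (simp add: algebra_simps)
qed simp

lemma rearranged_displacement_cyclic_shift:
  fixes \<gamma> :: "real \<Rightarrow> complex" and C :: "nat \<Rightarrow> real"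
  assumes "is_cyclic_shift k \<sigma>" "C 0 = 0" "C k = 1" "cis (\<theta> 1) = cis (\<theta> 0)"
  obtains x where "rearranged_displacement \<gamma> \<theta> C \<sigma> k = cis (- \<theta> x) * (\<gamma> 1 - \<gamma> 0)"
proof -
  obtain h where h: "h < k" "\<forall>i\<in>{1..k}. \<sigma> i = (if i \<le> k - h then i + h else i + h - k)"
    using assms(1) unfolding is_cyclic_shift_def by blast
  have run1: "\<forall>l\<in>{0 + 1..0 + (k - h)}. \<sigma> l = h + (l - 0)"
    and run2: "\<forall>l\<in>{(k - h) + 1..(k - h) + h}. \<sigma> l = 0 + (l - (k - h))"
    using h by auto
  have first: "turning_before \<theta> C \<sigma> (k - h + 1) = \<theta> 1 - \<theta> (C h)"
      "rearranged_displacement \<gamma> \<theta> C \<sigma> (k - h) = cis (- \<theta> (C h)) * (\<gamma> 1 - \<gamma> (C h))"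
    and second: "rearranged_displacement \<gamma> \<theta> C \<sigma> k = rearranged_displacement \<gamma> \<theta> C \<sigma> (k - h)
        + cis (turning_before \<theta> C \<sigma> (k - h + 1) - \<theta> 0) * (\<gamma> (C h) - \<gamma> 0)"
    using rearranged_consecutive_run[OF run1, where \<theta> = \<theta> and C = C and \<gamma> = \<gamma>]
      rearranged_consecutive_run[OF run2, where \<theta> = \<theta> and C = C and \<gamma> = \<gamma>] assms(2,3) h(1)
    by (simp_all add: turning_before_Suc_0 rearranged_displacement_0)
  have "cis (\<theta> 1 - \<theta> (C h) - \<theta> 0) = cis (- \<theta> (C h))"
    using cis_add_full_turn[OF assms(4), of "- \<theta> (C h)"] by simp
  then have "rearranged_displacement \<gamma> \<theta> C \<sigma> k = cis (- \<theta> (C h)) * (\<gamma> 1 - \<gamma> 0)"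
    unfolding second first by (simp add: algebra_simps)
  then show ?thesis
    by (rule that)
qed

definition cyclically_ordered :: "nat \<Rightarrow> nat \<Rightarrow> nat \<Rightarrow> bool" where
  "cyclically_ordered a b c \<longleftrightarrow> a < b \<and> b < c \<or> b < c \<and> c < a \<or> c < a \<and> a < b"

lemma cyclic_successor:
  assumes perm: "\<sigma> permutes {1..k}"
    and order: "\<And>i j l. i \<in> {1..k} \<Longrightarrow> j \<in> {1..k} \<Longrightarrow> l \<in> {1..k} \<Longrightarrow>
                  \<sigma> i < \<sigma> j \<Longrightarrow> \<sigma> j < \<sigma> l \<Longrightarrow> cyclically_ordered i j l"
    and j: "1 \<le> j" "j < k"
  shows "\<sigma> (Suc j) = (if \<sigma> j = k then 1 else Suc (\<sigma> j))"
proof (rule ccontr)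
  define v where "v = (if \<sigma> j = k then 1 else Suc (\<sigma> j))"
  assume "\<sigma> (Suc j) \<noteq> (if \<sigma> j = k then 1 else Suc (\<sigma> j))"
  then have next_ne: "\<sigma> (Suc j) \<noteq> v"
    by (simp add: v_def)
  have range: "\<sigma> j \<in> {1..k}" "\<sigma> (Suc j) \<in> {1..k}"
    using permutes_in_image[OF perm] j by auto
  have "\<sigma> (Suc j) \<noteq> \<sigma> j"
    using inj_eq[OF permutes_inj[OF perm], of "Suc j" j] by simp
  have "v \<in> {1..k}"
    using range by (auto simp: v_def)
  then have "v \<in> \<sigma> ` {1..k}"
    by (simp only: permutes_image[OF perm])
  then obtain j' where j': "j' \<in> {1..k}" "\<sigma> j' = v"
    by blast
  have "j' \<noteq> j" "j' \<noteq> Suc j"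
    using j' next_ne range j by (auto simp: v_def split: if_splits)
  then have no_order: "\<not> cyclically_ordered j' (Suc j) j" "\<not> cyclically_ordered (Suc j) j j'"
      "\<not> cyclically_ordered j j' (Suc j)"
    by (auto simp: cyclically_ordered_def)
  \<comment> \<open>\<open>\<sigma> (Suc j)\<close> lies below \<open>\<sigma> j\<close> or beyond its cyclic successor \<open>\<sigma> j'\<close>\<close>
  show False
    using order[of j' "Suc j" j] order[of "Suc j" j j'] order[of j j' "Suc j"] no_order j j' range
      next_ne \<open>\<sigma> (Suc j) \<noteq> \<sigma> j\<close>
    by (force simp: v_def split: if_splits)
qed

lemma not_cyclic_shift_reverses_triple:
  assumes perm: "\<sigma> permutes {1..k}" and k: "0 < k" and not_shift: "\<not> is_cyclic_shift k \<sigma>"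
  obtains i j l where "i \<in> {1..k}" "j \<in> {1..k}" "l \<in> {1..k}" "\<sigma> i < \<sigma> j" "\<sigma> j < \<sigma> l"
    "\<not> cyclically_ordered i j l"
proof (cases "\<exists>i j l. i \<in> {1..k} \<and> j \<in> {1..k} \<and> l \<in> {1..k} \<and> \<sigma> i < \<sigma> j \<and> \<sigma> j < \<sigma> l
    \<and> \<not> cyclically_ordered i j l")
  case True
  then show ?thesis
    using that by blast
next
  case False
  then have order: "cyclically_ordered i j l"
    if "i \<in> {1..k}" "j \<in> {1..k}" "l \<in> {1..k}" "\<sigma> i < \<sigma> j" "\<sigma> j < \<sigma> l" for i j l
    using that by blast
  define h where "h = \<sigma> 1 - 1"
  have "\<sigma> 1 \<in> {1..k}"
    using permutes_in_image[OF perm] k by auto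
  then have h: "h < k" "\<sigma> 1 = h + 1"
    by (auto simp: h_def)
  have "\<sigma> i = (if i \<le> k - h then i + h else i + h - k)" if "1 \<le> i" "i \<le> k" for i
    using that
  proof (induction i rule: nat_induct_at_least)
    case (Suc i)
    then show ?case
      using cyclic_successor[OF perm order, of i] h by (auto split: if_splits)
  qed (use h in simp)
  then show ?thesis
    using not_shift h unfolding is_cyclic_shift_def by auto
qed

text \<open>Only the arcs \<open>p = [0, x]\<close> and \<open>q = [x, 1]\<close> are nondegenerate.\<close>

definition two_piece_cuts :: "nat \<Rightarrow> nat \<Rightarrow> real \<Rightarrow> nat \<Rightarrow> real" where
  "two_piece_cuts p q x i = (if i < p then 0 else if i < q then x else 1)"

lemma two_piece_cuts_increment:
  fixes F :: "real \<Rightarrow> 'a::ab_group_add"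
  assumes perm: "\<sigma> permutes {1..k}" and pq: "1 \<le> p" "p < q"
    and pos: "jp \<in> {1..k}" "jq \<in> {1..k}" "\<sigma> jp = p" "\<sigma> jq = q" and l: "l \<in> {1..k}"
  shows "F (two_piece_cuts p q x (\<sigma> l)) - F (two_piece_cuts p q x (\<sigma> l - 1))
           = (if l = jp then F x - F 0 else 0) + (if l = jq then F 1 - F x else 0)"
proof -
  have jpq: "jp \<noteq> jq"
    using pos pq by auto
  consider "l = jp" | "l = jq" | "l \<noteq> jp" "l \<noteq> jq"
    by blast
  then show ?thesis
  proof cases
    case 1
    then show ?thesis
      using pos pq jpq by (simp add: two_piece_cuts_def)
  next
    case 2
    moreover have "\<not> q - 1 < p"
      using pq by linarith
    ultimately show ?thesis
      using pos pq jpq by (simp add: two_piece_cuts_def)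
  next
    case 3
    then have "\<sigma> l \<noteq> p" "\<sigma> l \<noteq> q"
      using inj_eq[OF permutes_inj[OF perm]] pos by metis+
    moreover have "1 \<le> \<sigma> l"
      using permutes_in_image[OF perm] l by auto
    ultimately have "two_piece_cuts p q x (\<sigma> l) = two_piece_cuts p q x (\<sigma> l - 1)"
      using pq by (auto simp: two_piece_cuts_def)
    then show ?thesis
      using 3 by simp
  qed
qed

lemma rearranged_displacement_two_piece_cuts:
  fixes \<gamma> :: "real \<Rightarrow> complex"
  assumes perm: "\<sigma> permutes {1..k}" and pq: "1 \<le> p" "p < q"
    and pos: "jp \<in> {1..k}" "jq \<in> {1..k}" "\<sigma> jp = p" "\<sigma> jq = q"
    and tangents: "cis (\<theta> 1) = cis (\<theta> 0)"
  shows "rearranged_displacement \<gamma> \<theta> (two_piece_cuts p q x) \<sigma> k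
           = cis (- \<theta> (if jq < jp then x else 0)) * (\<gamma> 1 - \<gamma> 0)"
proof -
  let ?C = "two_piece_cuts p q x"
  let ?T = "turning_before \<theta> ?C \<sigma>"
  note increment = two_piece_cuts_increment[OF perm pq pos]
  have start: "?C (\<sigma> jp - 1) = 0" "?C (\<sigma> jq - 1) = x"
    using pos pq by (auto simp: two_piece_cuts_def)
  have turning: "?T j = (if jp < j then \<theta> x - \<theta> 0 else 0) + (if jq < j then \<theta> 1 - \<theta> x else 0)"
    if "j \<le> Suc k" for j
  proof -
    have "?T j = (\<Sum>l = 1..<j. (if l = jp then \<theta> x - \<theta> 0 else 0) + (if l = jq then \<theta> 1 - \<theta> x else 0))"
      unfolding turning_before_def using that by (intro sum.cong refl increment) auto
    then show ?thesis
      using pos by (simp add: sum.distrib)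
  qed
  have "rearranged_displacement \<gamma> \<theta> ?C \<sigma> k = (\<Sum>l = 1..k.
      (if l = jp then cis (?T jp - \<theta> 0) * (\<gamma> x - \<gamma> 0) else 0)
      + (if l = jq then cis (?T jq - \<theta> x) * (\<gamma> 1 - \<gamma> x) else 0))"
    unfolding rearranged_displacement_def
  proof (intro sum.cong refl)
    fix l assume "l \<in> {1..k}"
    then show "cis (?T l - \<theta> (?C (\<sigma> l - 1))) * (\<gamma> (?C (\<sigma> l)) - \<gamma> (?C (\<sigma> l - 1)))
        = (if l = jp then cis (?T jp - \<theta> 0) * (\<gamma> x - \<gamma> 0) else 0)
          + (if l = jq then cis (?T jq - \<theta> x) * (\<gamma> 1 - \<gamma> x) else 0)"
      using increment[of l \<gamma>] start pos pq by (auto simp: distrib_left)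
  qed
  also have "\<dots> = cis (?T jp - \<theta> 0) * (\<gamma> x - \<gamma> 0) + cis (?T jq - \<theta> x) * (\<gamma> 1 - \<gamma> x)"
    using pos by (simp add: sum.distrib)
  also have "\<dots> = cis (- \<theta> (if jq < jp then x else 0)) * (\<gamma> 1 - \<gamma> 0)"
  proof (cases "jq < jp")
    case True
    have "cis (\<theta> 1 - \<theta> x - \<theta> 0) = cis (- \<theta> x)"
      using cis_add_full_turn[OF tangents, of "- \<theta> x"] by simp
    then show ?thesis
      using True pos turning by (simp add: algebra_simps)
  next
    case False
    then show ?thesis
      using pos pq turning by (auto simp: algebra_simps)
  qed
  finally show ?thesis .
qed

lemma continuous_on_rearranged_displacement:
  fixes F :: "'a::topological_space \<Rightarrow> nat \<Rightarrow> real" and \<gamma> :: "real \<Rightarrow> complex"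
  assumes cont: "continuous_on {0..1} \<gamma>" "continuous_on {0..1} \<theta>"
    and perm: "\<sigma> permutes {1..k}"
    and cuts_cont: "\<And>i. i \<le> k \<Longrightarrow> continuous_on X (\<lambda>x. F x i)"
    and cuts_range: "\<And>x i. x \<in> X \<Longrightarrow> i \<le> k \<Longrightarrow> F x i \<in> {0..1}"
  shows "continuous_on X (\<lambda>x. rearranged_displacement \<gamma> \<theta> (F x) \<sigma> k)"
proof -
  have at_cut: "continuous_on X (\<lambda>x. g (F x i))"
    if "continuous_on {0..1} g" "i \<le> k" for g :: "real \<Rightarrow> 'b::topological_space" and i
    by (rule continuous_on_compose2[OF that(1) cuts_cont[OF that(2)]]) (intro image_subsetI cuts_range that(2))
  have index: "\<sigma> l \<le> k" if "l \<in> {1..k}" for l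
    using permutes_in_image[OF perm, of l] that by simp
  have index_pred: "\<sigma> l - 1 \<le> k" if "l \<in> {1..k}" for l
    using index[OF that] by (rule order_trans[OF diff_le_self])
  show ?thesis
    unfolding rearranged_displacement_def turning_before_def
  proof (rule continuous_on_sum)
    fix l assume l: "l \<in> {1..k}"
    have turning: "continuous_on X (\<lambda>x. \<Sum>l' = 1..<l. \<theta> (F x (\<sigma> l')) - \<theta> (F x (\<sigma> l' - 1)))"
    proof (rule continuous_on_sum)
      fix l' assume "l' \<in> {1..<l}"
      then have "l' \<in> {1..k}"
        using l by auto
      then show "continuous_on X (\<lambda>x. \<theta> (F x (\<sigma> l')) - \<theta> (F x (\<sigma> l' - 1)))"
        by (intro continuous_on_diff at_cut[OF cont(2)] index index_pred)
    qed
    show "continuous_on X (\<lambda>x. cis ((\<Sum>l' = 1..<l. \<theta> (F x (\<sigma> l')) - \<theta> (F x (\<sigma> l' - 1)))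
        - \<theta> (F x (\<sigma> l - 1))) * (\<gamma> (F x (\<sigma> l)) - \<gamma> (F x (\<sigma> l - 1))))"
      by (intro continuous_on_mult continuous_on_cis continuous_on_diff turning
          at_cut[OF cont(1)] at_cut[OF cont(2)] index index_pred l)
  qed
qed

definition cut_triangle :: "(real \<times> real) set" where
  "cut_triangle = {z. 0 \<le> fst z \<and> fst z \<le> snd z \<and> snd z \<le> 1}"

lemma compact_cut_triangle: "compact cut_triangle"
proof -
  have "closed cut_triangle"
    unfolding cut_triangle_def by (intro closed_Collect_conj closed_Collect_le continuous_intros)
  moreover have "cut_triangle \<subseteq> cbox (0, 0) (1, 1)"
    by (auto simp: cut_triangle_def cbox_Pair_eq)
  ultimately show ?thesis
    by (metis compact_cbox compact_Int_closed inf.absorb_iff2)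
qed

lemma convex_cut_triangle: "convex cut_triangle"
  unfolding cut_triangle_def convex_alt
proof clarify
  fix x y x' y' u :: real
  assume "0 \<le> fst (x, y)" "fst (x, y) \<le> snd (x, y)" "snd (x, y) \<le> 1"
    "0 \<le> fst (x', y')" "fst (x', y') \<le> snd (x', y')" "snd (x', y') \<le> 1" "0 \<le> u" "u \<le> 1"
  then show "0 \<le> fst ((1 - u) *\<^sub>R (x, y) + u *\<^sub>R (x', y')) \<and>
      fst ((1 - u) *\<^sub>R (x, y) + u *\<^sub>R (x', y')) \<le> snd ((1 - u) *\<^sub>R (x, y) + u *\<^sub>R (x', y')) \<and>
      snd ((1 - u) *\<^sub>R (x, y) + u *\<^sub>R (x', y')) \<le> 1"
    by (simp add: convex_bound_le add_mono mult_left_mono)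
qed

lemma continuous_log_of_constant_eq:
  fixes g :: "'a::topological_space \<Rightarrow> complex"
  assumes S: "connected S" and g: "continuous_on S g" and exp_g: "\<And>x. x \<in> S \<Longrightarrow> exp (g x) = w"
    and xy: "x \<in> S" "y \<in> S"
  shows "g x = g y"
proof -
  have "g constant_on S"
  proof (rule continuous_discrete_range_constant[OF S g])
    fix x assume x: "x \<in> S"
    have "2 * pi \<le> norm (g y - g x)" if y: "y \<in> S" "g y \<noteq> g x" for y
    proof -
      obtain n :: int where n: "g y = g x + of_int (2 * n) * pi * \<i>"
        using exp_g[OF x] exp_g[OF y(1)] exp_eq by metis
      then have "n \<noteq> 0"
        using y(2) by auto
      then have "2 * pi \<le> \<bar>real_of_int (2 * n)\<bar> * pi"
        by (intro mult_right_mono) auto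
      then show ?thesis
        by (simp add: n norm_mult)
    qed
    then show "\<exists>e>0. \<forall>y. y \<in> S \<and> g y \<noteq> g x \<longrightarrow> e \<le> norm (g y - g x)"
      using pi_gt_zero by (metis mult_pos_pos zero_less_numeral)
  qed
  then show ?thesis
    using xy unfolding constant_on_def by auto
qed

lemma continuous_log_increment_along_path:
  fixes L :: "'a::topological_space \<Rightarrow> complex" and \<pi> :: "real \<Rightarrow> 'a" and \<phi> :: "real \<Rightarrow> real"
  assumes L: "continuous_on S L" and \<pi>: "continuous_on {0..1} \<pi>" "\<pi> ` {0..1} \<subseteq> S"
    and \<phi>: "continuous_on {0..1} \<phi>" "cis (\<phi> 0) = \<omega>" "cis (\<phi> 1) = \<omega>" and V: "V \<noteq> 0"
    and near: "\<And>t. t \<in> {0..1} \<Longrightarrow> norm (exp (L (\<pi> t)) - cis (\<phi> t) * V) < norm V"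
  shows "L (\<pi> 1) - L (\<pi> 0) = Ln (exp (L (\<pi> 1)) / (\<omega> * V)) - Ln (exp (L (\<pi> 0)) / (\<omega> * V))
           + \<i> * (\<phi> 1 - \<phi> 0)"
proof -
  define Q where "Q t = exp (L (\<pi> t)) / (cis (\<phi> t) * V)" for t
  have Q: "0 < Re (Q t)" if "t \<in> {0..1}" for t
  proof -
    have "Q t - 1 = (exp (L (\<pi> t)) - cis (\<phi> t) * V) / (cis (\<phi> t) * V)"
      using V by (simp add: Q_def field_simps)
    then have "norm (Q t - 1) < 1"
      using near[OF that] V by (simp add: norm_divide norm_mult divide_less_eq)
    then show ?thesis
      using abs_Re_le_cmod[of "Q t - 1"] by simp
  qed
  \<comment> \<open>\<open>Q\<close> stays in the right half-plane, so \<open>g\<close> is a continuous logarithm of the constant \<open>V\<close>\<close>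
  define g where "g t = L (\<pi> t) - Ln (Q t) - \<i> * \<phi> t" for t
  have "Q t \<notin> \<real>\<^sub>\<le>\<^sub>0" if "t \<in> {0..1}" for t
    using Q[OF that] by (auto simp: complex_nonpos_Reals_iff)
  then have "continuous_on {0..1} g"
    unfolding g_def Q_def using V
    by (intro continuous_intros continuous_on_compose2[OF L \<pi>] \<phi>(1)) auto
  moreover have "exp (g t) = V" if "t \<in> {0..1}" for t
  proof -
    have "Q t \<noteq> 0"
      using Q[OF that] by auto
    then show ?thesis
      using V by (simp add: g_def exp_diff cis_conv_exp Q_def)
  qed
  ultimately have "g 1 = g 0"
    by (intro continuous_log_of_constant_eq[OF connected_Icc]) auto
  then show ?thesis
    using \<phi>(2,3) by (simp add: g_def Q_def algebra_simps)
qed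

text \<open>Along each edge \<open>H\<close> stays within \<open>norm V\<close> of a vector turning by the indicated angle, which
  determines the increment of a continuous logarithm of \<open>H\<close> on the convex triangle; around the
  closed boundary these increments cancel.\<close>

lemma cut_triangle_boundary_turning:
  fixes H :: "real \<times> real \<Rightarrow> complex" and \<theta> :: "real \<Rightarrow> real"
  assumes H: "continuous_on cut_triangle H" "\<And>z. z \<in> cut_triangle \<Longrightarrow> H z \<noteq> 0"
    and \<theta>: "continuous_on {0..1} \<theta>" "cis (\<theta> 1) = cis (\<theta> 0)" and V: "V \<noteq> 0"
    and left: "\<And>t. t \<in> {0..1} \<Longrightarrow> norm (H (0, t) - cis (- \<theta> (if b1 then t else 0)) * V) < norm V"
    and top: "\<And>t. t \<in> {0..1} \<Longrightarrow> norm (H (t, 1) - cis (- \<theta> (if b2 then t else 0)) * V) < norm V"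
    and diagonal: "\<And>t. t \<in> {0..1} \<Longrightarrow> norm (H (t, t) - cis (- \<theta> (if b3 then t else 0)) * V) < norm V"
  shows "(if b1 then \<theta> 1 - \<theta> 0 else 0) + (if b2 then \<theta> 1 - \<theta> 0 else 0) = (if b3 then \<theta> 1 - \<theta> 0 else 0)"
proof -
  obtain L where L: "continuous_on cut_triangle L" "\<And>z. z \<in> cut_triangle \<Longrightarrow> H z = exp (L z)"
    using continuous_logarithm_on_contractible[OF H(1) convex_imp_contractible[OF convex_cut_triangle] H(2)]
    by metis
  define \<Lambda> where "\<Lambda> z = Ln (exp (L z) / (cis (- \<theta> 0) * V))" for z
  have angle: "continuous_on {0..1} (\<lambda>t. - \<theta> (if b then f t else 0))"
    if "continuous_on {0..1} f" "f ` {0..1} \<subseteq> {0..1}" for b f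
    using that by (cases b) (auto intro!: continuous_intros continuous_on_compose2[OF \<theta>(1)])
  have angle_end: "cis (- \<theta> (if b then 1 else 0)) = cis (- \<theta> 0)" for b
    using \<theta>(2) by (simp flip: cis_cnj)
  note increment = continuous_log_increment_along_path[OF L(1) _ _ angle _ _ V, where \<omega> = "cis (- \<theta> 0)"]
  have "L (0, 1) - L (0, 0) = \<Lambda> (0, 1) - \<Lambda> (0, 0) + \<i> * (\<theta> 0 - \<theta> (if b1 then 1 else 0))"
    using increment[of "\<lambda>t. (0, t)" "\<lambda>t. t" b1] left L(2) angle_end
    by (simp add: \<Lambda>_def cut_triangle_def image_subset_iff continuous_on_Pair)
  moreover have "L (1, 1) - L (0, 1) = \<Lambda> (1, 1) - \<Lambda> (0, 1) + \<i> * (\<theta> 0 - \<theta> (if b2 then 1 else 0))"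
    using increment[of "\<lambda>t. (t, 1)" "\<lambda>t. t" b2] top L(2) angle_end
    by (simp add: \<Lambda>_def cut_triangle_def image_subset_iff continuous_on_Pair)
  moreover have "norm (H (1 - t, 1 - t) - cis (- \<theta> (if b3 then 1 - t else 0)) * V) < norm V"
    if "t \<in> {0..1}" for t
    using diagonal[of "1 - t"] that by simp
  then have "L (0, 0) - L (1, 1) = \<Lambda> (0, 0) - \<Lambda> (1, 1) + \<i> * (\<theta> (if b3 then 1 else 0) - \<theta> 0)"
    using increment[of "\<lambda>t. (1 - t, 1 - t)" "\<lambda>t. 1 - t" b3] L(2) angle_end
    by (simp add: \<Lambda>_def cut_triangle_def image_subset_iff continuous_on_Pair continuous_on_diff cong: if_cong)
  ultimately have "\<i> * (complex_of_real (\<theta> (if b1 then 1 else 0)) + complex_of_real (\<theta> (if b2 then 1 else 0))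
      - complex_of_real (\<theta> (if b3 then 1 else 0)) - complex_of_real (\<theta> 0)) = 0"
    unfolding of_real_diff by algebra
  then have "\<theta> (if b1 then 1 else 0) + \<theta> (if b2 then 1 else 0) - \<theta> (if b3 then 1 else 0) - \<theta> 0 = 0"
    by (metis complex_i_not_zero mult_eq_0_iff of_real_add of_real_diff of_real_eq_0_iff)
  then show ?thesis
    by (auto split: if_splits)
qed

text \<open>Only the arcs \<open>p = [0, fst z]\<close>, \<open>q = [fst z, snd z]\<close> and \<open>r = [snd z, 1]\<close> are
  nondegenerate; on each edge of \<open>cut_triangle\<close> one of them collapses.\<close>

definition three_piece_cuts :: "nat \<Rightarrow> nat \<Rightarrow> nat \<Rightarrow> real \<times> real \<Rightarrow> nat \<Rightarrow> real" where
  "three_piece_cuts p q r z i = (if i < p then 0 else if i < q then fst z else if i < r then snd z else 1)"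

lemma three_piece_cuts_on_boundary:
  assumes "p < q" "q < r"
  shows "three_piece_cuts p q r (0, t) = two_piece_cuts q r t"
    and "three_piece_cuts p q r (t, 1) = two_piece_cuts p q t"
    and "three_piece_cuts p q r (t, t) = two_piece_cuts p r t"
  using assms by (auto simp: fun_eq_iff three_piece_cuts_def two_piece_cuts_def)

lemma three_piece_cuts_mono:
  "p < q \<Longrightarrow> q < r \<Longrightarrow> z \<in> cut_triangle \<Longrightarrow> three_piece_cuts p q r z i \<le> three_piece_cuts p q r z (Suc i)"
  by (auto simp: three_piece_cuts_def cut_triangle_def)

lemma three_piece_cuts_range:
  "z \<in> cut_triangle \<Longrightarrow> three_piece_cuts p q r z i \<in> {0..1}"
  by (auto simp: three_piece_cuts_def cut_triangle_def)

lemma continuous_on_three_piece_cuts: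
  "continuous_on S f \<Longrightarrow> continuous_on S (\<lambda>x. three_piece_cuts p q r (f x) i)"
  by (cases "i < p"; cases "i < q"; cases "i < r") (auto simp: three_piece_cuts_def intro!: continuous_intros)

definition perturbed_cuts :: "nat \<Rightarrow> real \<Rightarrow> (nat \<Rightarrow> real) \<Rightarrow> nat \<Rightarrow> real" where
  "perturbed_cuts k \<epsilon> C i = (1 - \<epsilon>) * C i + \<epsilon> * (real i / real k)"

lemma perturbed_cuts_0 [simp]: "perturbed_cuts k 0 C = C"
  by (simp add: fun_eq_iff perturbed_cuts_def)

lemma perturbed_cuts_range:
  assumes "0 \<le> \<epsilon>" "\<epsilon> \<le> 1" "C i \<in> {0..1}" "i \<le> k"
  shows "perturbed_cuts k \<epsilon> C i \<in> {0..1}"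
proof -
  have uniform: "0 \<le> real i / real k" "real i / real k \<le> 1"
    using assms(4) by (cases "k = 0"; simp)+
  have "(1 - \<epsilon>) * C i + \<epsilon> * (real i / real k) \<le> 1"
    by (rule convex_bound_le) (use assms uniform in auto)
  moreover have "0 \<le> (1 - \<epsilon>) * C i + \<epsilon> * (real i / real k)"
    using assms uniform by (intro add_nonneg_nonneg mult_nonneg_nonneg) auto
  ultimately show ?thesis
    by (simp add: perturbed_cuts_def)
qed

lemma perturbed_cuts_strict_mono:
  assumes "0 < k" "0 < \<epsilon>" "\<epsilon> \<le> 1" "C i \<le> C (Suc i)"
  shows "perturbed_cuts k \<epsilon> C i < perturbed_cuts k \<epsilon> C (Suc i)"
proof -
  have "(1 - \<epsilon>) * C i \<le> (1 - \<epsilon>) * C (Suc i)"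
    using assms(3,4) by (intro mult_left_mono) auto
  moreover have "\<epsilon> * (real i / real k) < \<epsilon> * (real (Suc i) / real k)"
    using assms(1,2) by (intro mult_strict_left_mono divide_strict_right_mono) auto
  ultimately show ?thesis
    by (simp add: perturbed_cuts_def)
qed

lemma uniformly_close_slice:
  fixes \<Phi> :: "real \<times> 'a::metric_space \<Rightarrow> 'b::metric_space"
  assumes "compact T" "continuous_on ({0..1} \<times> T) \<Phi>" "0 < r"
  obtains \<epsilon> where "0 < \<epsilon>" "\<epsilon> \<le> 1" "\<And>z. z \<in> T \<Longrightarrow> dist (\<Phi> (\<epsilon>, z)) (\<Phi> (0, z)) < r"
proof -
  have "uniformly_continuous_on ({0..1} \<times> T) \<Phi>"
    using assms(1,2) by (intro compact_uniformly_continuous compact_Times compact_Icc)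
  then obtain \<delta> where \<delta>: "0 < \<delta>"
    "\<And>x x'. x \<in> {0..1} \<times> T \<Longrightarrow> x' \<in> {0..1} \<times> T \<Longrightarrow> dist x' x < \<delta> \<Longrightarrow> dist (\<Phi> x') (\<Phi> x) < r"
    using assms(3) unfolding uniformly_continuous_on_def by metis
  show ?thesis
  proof (rule that[of "min 1 (\<delta> / 2)"])
    fix z assume "z \<in> T"
    moreover have "dist (min 1 (\<delta> / 2), z) (0, z) < \<delta>"
      using \<delta>(1) by (simp add: dist_Pair_Pair)
    ultimately show "dist (\<Phi> (min 1 (\<delta> / 2), z)) (\<Phi> (0, z)) < r"
      using \<delta>(1) by (intro \<delta>(2)) auto
  qed (use \<delta>(1) in auto)
qed

lemma perturbed_three_piece_cuts_strict:
  assumes "0 < \<epsilon>" "\<epsilon> \<le> 1" "z \<in> cut_triangle" "0 < p" "p < q" "q < r" "r \<le> k"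
  defines "C \<equiv> perturbed_cuts k \<epsilon> (three_piece_cuts p q r z)"
  shows "C 0 = 0" "C k = 1" "\<forall>i<k. C i < C (Suc i)"
proof -
  have "0 < k"
    using assms(6,7) by simp
  then show "C 0 = 0" "C k = 1"
    using assms(4-7) by (simp_all add: C_def perturbed_cuts_def three_piece_cuts_def)
  show "\<forall>i<k. C i < C (Suc i)"
    using assms(1-3,5,6) \<open>0 < k\<close> by (simp add: C_def perturbed_cuts_strict_mono three_piece_cuts_mono)
qed

lemma continuous_on_perturbed_three_piece_displacement:
  fixes \<gamma> :: "real \<Rightarrow> complex"
  assumes "continuous_on {0..1} \<gamma>" "continuous_on {0..1} \<theta>" "\<sigma> permutes {1..k}"
  shows "continuous_on ({0..1} \<times> cut_triangle)
           (\<lambda>x. rearranged_displacement \<gamma> \<theta> (perturbed_cuts k (fst x) (three_piece_cuts p q r (snd x))) \<sigma> k)"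
proof (rule continuous_on_rearranged_displacement[OF assms])
  show "continuous_on ({0..1} \<times> cut_triangle) (\<lambda>x. perturbed_cuts k (fst x) (three_piece_cuts p q r (snd x)) i)" for i
    unfolding perturbed_cuts_def by (intro continuous_intros continuous_on_three_piece_cuts)
  show "perturbed_cuts k (fst x) (three_piece_cuts p q r (snd x)) i \<in> {0..1}"
    if "x \<in> {0..1} \<times> cut_triangle" "i \<le> k" for x i
    using that by (intro perturbed_cuts_range three_piece_cuts_range) auto
qed

lemma rearranged_displacement_three_piece_boundary:
  fixes \<gamma> :: "real \<Rightarrow> complex"
  assumes perm: "\<sigma> permutes {1..k}"
    and pos: "jp \<in> {1..k}" "jq \<in> {1..k}" "jr \<in> {1..k}" "\<sigma> jp < \<sigma> jq" "\<sigma> jq < \<sigma> jr"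
    and tangents: "cis (\<theta> 1) = cis (\<theta> 0)"
  defines "D z \<equiv> rearranged_displacement \<gamma> \<theta> (three_piece_cuts (\<sigma> jp) (\<sigma> jq) (\<sigma> jr) z) \<sigma> k"
  shows "D (0, t) = cis (- \<theta> (if jr < jq then t else 0)) * (\<gamma> 1 - \<gamma> 0)"
    and "D (t, 1) = cis (- \<theta> (if jq < jp then t else 0)) * (\<gamma> 1 - \<gamma> 0)"
    and "D (t, t) = cis (- \<theta> (if jr < jp then t else 0)) * (\<gamma> 1 - \<gamma> 0)"
proof -
  have "1 \<le> \<sigma> jp"
    using permutes_in_image[OF perm, of jp] pos(1) by simp
  note two_piece = rearranged_displacement_two_piece_cuts[OF perm _ _ _ _ refl refl tangents]
    and boundary = three_piece_cuts_on_boundary[OF pos(4,5)]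
  show "D (0, t) = cis (- \<theta> (if jr < jq then t else 0)) * (\<gamma> 1 - \<gamma> 0)"
    using two_piece[OF _ pos(5) pos(2,3)] \<open>1 \<le> \<sigma> jp\<close> pos(4) by (simp add: D_def boundary)
  show "D (t, 1) = cis (- \<theta> (if jq < jp then t else 0)) * (\<gamma> 1 - \<gamma> 0)"
    using two_piece[OF _ pos(4) pos(1,2)] \<open>1 \<le> \<sigma> jp\<close> by (simp add: D_def boundary)
  show "D (t, t) = cis (- \<theta> (if jr < jp then t else 0)) * (\<gamma> 1 - \<gamma> 0)"
    using two_piece[OF _ _ pos(1,3)] \<open>1 \<le> \<sigma> jp\<close> pos(4,5) by (simp add: D_def boundary)
qed

lemma exists_cuts_rearranged_displacement_zero:
  fixes \<gamma> :: "real \<Rightarrow> complex" and \<theta> :: "real \<Rightarrow> real"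
  assumes cont: "continuous_on {0..1} \<gamma>" "continuous_on {0..1} \<theta>"
    and tangents: "cis (\<theta> 1) = cis (\<theta> 0)" and winding: "\<theta> 1 \<noteq> \<theta> 0"
    and not_closed: "\<gamma> 0 \<noteq> \<gamma> 1" and perm: "\<sigma> permutes {1..k}"
    and triple: "jp \<in> {1..k}" "jq \<in> {1..k}" "jr \<in> {1..k}" "\<sigma> jp < \<sigma> jq" "\<sigma> jq < \<sigma> jr"
      "\<not> cyclically_ordered jp jq jr"
  obtains C where "C 0 = 0" "C k = 1" "\<forall>i<k. C i < C (Suc i)" "rearranged_displacement \<gamma> \<theta> C \<sigma> k = 0"
proof -
  define V where "V = \<gamma> 1 - \<gamma> 0"
  have V: "V \<noteq> 0"
    using not_closed by (simp add: V_def)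
  define cuts where "cuts x = perturbed_cuts k (fst x) (three_piece_cuts (\<sigma> jp) (\<sigma> jq) (\<sigma> jr) (snd x))" for x
  define \<Phi> where "\<Phi> x = rearranged_displacement \<gamma> \<theta> (cuts x) \<sigma> k" for x
  have \<Phi>: "continuous_on ({0..1} \<times> cut_triangle) \<Phi>"
    unfolding \<Phi>_def cuts_def by (rule continuous_on_perturbed_three_piece_displacement[OF cont perm])
  then obtain \<epsilon> where \<epsilon>: "0 < \<epsilon>" "\<epsilon> \<le> 1"
    and close: "\<And>z. z \<in> cut_triangle \<Longrightarrow> dist (\<Phi> (\<epsilon>, z)) (\<Phi> (0, z)) < norm V"
    using uniformly_close_slice[OF compact_cut_triangle \<Phi>] V by (metis zero_less_norm_iff)
  show ?thesis
  proof (cases "\<exists>z\<in>cut_triangle. \<Phi> (\<epsilon>, z) = 0")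
    case True
    then obtain z where z: "z \<in> cut_triangle" "\<Phi> (\<epsilon>, z) = 0"
      by blast
    have "0 < \<sigma> jp" "\<sigma> jr \<le> k"
      using permutes_in_image[OF perm, of jp] permutes_in_image[OF perm, of jr] triple(1,3) by simp_all
    note strict = perturbed_three_piece_cuts_strict[OF \<epsilon> z(1) this(1) triple(4,5) this(2)]
    show ?thesis
      using that[OF strict] z(2) by (simp add: \<Phi>_def cuts_def)
  next
    case False
    have H: "continuous_on cut_triangle (\<lambda>z. \<Phi> (\<epsilon>, z))"
      by (rule continuous_on_compose2[OF \<Phi>]) (use \<epsilon> in \<open>auto intro!: continuous_intros\<close>)
    note boundary = rearranged_displacement_three_piece_boundary[OF perm triple(1-5) tangents]
    have "(if jr < jq then \<theta> 1 - \<theta> 0 else 0) + (if jq < jp then \<theta> 1 - \<theta> 0 else 0)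
        = (if jr < jp then \<theta> 1 - \<theta> 0 else 0)"
    proof (rule cut_triangle_boundary_turning[OF H _ cont(2) tangents V])
      fix t :: real assume "t \<in> {0..1}"
      then show "norm (\<Phi> (\<epsilon>, (0, t)) - cis (- \<theta> (if jr < jq then t else 0)) * V) < norm V"
        and "norm (\<Phi> (\<epsilon>, (t, 1)) - cis (- \<theta> (if jq < jp then t else 0)) * V) < norm V"
        and "norm (\<Phi> (\<epsilon>, (t, t)) - cis (- \<theta> (if jr < jp then t else 0)) * V) < norm V"
        using close[of "(0, t)"] close[of "(t, 1)"] close[of "(t, t)"]
        by (simp_all add: cut_triangle_def dist_norm \<Phi>_def cuts_def V_def boundary)
    qed (use False in auto)
    moreover have "jp \<noteq> jq" "jq \<noteq> jr" "jp \<noteq> jr"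
      using triple by auto
    ultimately show ?thesis
      using triple(6) winding by (auto simp: cyclically_ordered_def split: if_splits)
  qed
qed

theorem theorem4p1:
  fixes \<gamma> \<gamma>' :: "real \<Rightarrow> complex" and \<theta> :: "real \<Rightarrow> real" and c :: real
    and m :: int and k :: nat and \<sigma> :: "nat \<Rightarrow> nat"
  assumes deriv: "\<forall>s\<in>{0..1}. (\<gamma> has_vector_derivative \<gamma>' s) (at s within {0..1})"
    and C1: "continuous_on {0..1} \<gamma>'"
    and c_pos: "c > 0"
    and speed: "\<forall>s\<in>{0..1}. norm (\<gamma>' s) = c"
    and not_closed: "\<gamma> 0 \<noteq> \<gamma> 1"
    and theta_cont: "continuous_on {0..1} \<theta>"
    and theta: "\<forall>s\<in>{0..1}. \<gamma>' s = complex_of_real c * cis (\<theta> s)"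
    and turning: "\<theta> 1 - \<theta> 0 = 2 * pi * of_int m"
    and m_nz: "m \<noteq> 0"
    and k: "k \<ge> 3"
    and perm: "\<sigma> permutes {1..k}"
  shows "(\<exists>C :: nat \<Rightarrow> real. C 0 = 0 \<and> C k = 1 \<and> (\<forall>i<k. C i < C (Suc i)) \<and>
            closed_C1 (rearranged \<gamma> k \<sigma> C))
         \<longleftrightarrow> \<not> is_cyclic_shift k \<sigma>"
proof -
  have shift: "\<theta> 1 = \<theta> 0 + 2 * pi * of_int m"
    using turning by simp
  then have tangents: "cis (\<theta> 1) = cis (\<theta> 0)"
    by (simp only: cis_mult [symmetric]) simp
  have closed_iff: "closed_C1 (rearranged \<gamma> k \<sigma> C) \<longleftrightarrow> rearranged_displacement \<gamma> \<theta> C \<sigma> k = 0"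
    if "C 0 = 0" "C k = 1" "\<forall>i<k. C i < C (Suc i)" for C
    using closed_C1_rearranged_iff[OF deriv theta c_pos tangents perm _ that] k by simp
  have winding: "\<theta> 1 \<noteq> \<theta> 0"
    using shift m_nz by simp
  show ?thesis
  proof
    assume "\<exists>C :: nat \<Rightarrow> real. C 0 = 0 \<and> C k = 1 \<and> (\<forall>i<k. C i < C (Suc i)) \<and>
              closed_C1 (rearranged \<gamma> k \<sigma> C)"
    then obtain C :: "nat \<Rightarrow> real" where C: "C 0 = 0" "C k = 1" "rearranged_displacement \<gamma> \<theta> C \<sigma> k = 0"
      using closed_iff by blast
    show "\<not> is_cyclic_shift k \<sigma>"
    proof
      assume "is_cyclic_shift k \<sigma>"
      then obtain x where "rearranged_displacement \<gamma> \<theta> C \<sigma> k = cis (- \<theta> x) * (\<gamma> 1 - \<gamma> 0)"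
        using rearranged_displacement_cyclic_shift C(1,2) tangents by blast
      then show False
        using C(3) not_closed by simp
    qed
  next
    assume "\<not> is_cyclic_shift k \<sigma>"
    moreover have "0 < k"
      using k by simp
    ultimately obtain jp jq jr where triple: "jp \<in> {1..k}" "jq \<in> {1..k}" "jr \<in> {1..k}"
      "\<sigma> jp < \<sigma> jq" "\<sigma> jq < \<sigma> jr" "\<not> cyclically_ordered jp jq jr"
      using not_cyclic_shift_reverses_triple[OF perm] by blast
    have "continuous_on {0..1} \<gamma>"
      using deriv by (metis continuous_on_eq_continuous_within has_vector_derivative_continuous)
    then obtain C where "C 0 = 0" "C k = 1" "\<forall>i<k. C i < C (Suc i)" "rearranged_displacement \<gamma> \<theta> C \<sigma> k = 0"
      by (rule exists_cuts_rearranged_displacement_zero[OF _ theta_cont tangents winding not_closed perm triple])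
    then show "\<exists>C :: nat \<Rightarrow> real. C 0 = 0 \<and> C k = 1 \<and> (\<forall>i<k. C i < C (Suc i)) \<and>
        closed_C1 (rearranged \<gamma> k \<sigma> C)"
      using closed_iff by blast
  qed
qed

end
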